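(* Let $G$ be a connected graph on $n$ vertices and let $k$ be an integer with $2\le k\le \operatorname{diam}(G)$. Then \[ b(G^k)\le \left\lceil \sqrt{\frac{4(k-1)}{k^2}\,n}\;\right\rceil. \]
   Context: Graphs are finite, simple, undirected. $G^k$ is the graph on $V(G)$ in which distinct $u,v$ are adjacent iff $d_G(u,v)\le k$. Graph burning: in each round $i$ a vertex (source) is chosen and burned, and simultaneously every unburned neighbour of a vertex burned by the end of round $i-1$ becomes burned; burned vertices stay burned. The burning number $b(G)$ is the minimum number of rounds needed to burn all vertices. *)

theory Defs
  imports Complex_Main
begin

definition simple_graph :: "'a set \<Rightarrow> ('a \<Rightarrow> 'a \<Rightarrow> bool) \<Rightarrow> bool" where
  "simple_graph V E \<longleftrightarrow> finite V \<and> (\<forall>u v. E u v \<longrightarrow> u \<in> V \<and> v \<in> V)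
     \<and> (\<forall>u v. E u v \<longrightarrow> E v u) \<and> (\<forall>u. \<not> E u u)"

definition edge_rel :: "('a \<Rightarrow> 'a \<Rightarrow> bool) \<Rightarrow> ('a \<times> 'a) set" where
  "edge_rel E = {(u, v). E u v}"

definition connected_graph :: "'a set \<Rightarrow> ('a \<Rightarrow> 'a \<Rightarrow> bool) \<Rightarrow> bool" where
  "connected_graph V E \<longleftrightarrow> (\<forall>u\<in>V. \<forall>v\<in>V. (u, v) \<in> (edge_rel E)\<^sup>*)"

definition gdist :: "('a \<Rightarrow> 'a \<Rightarrow> bool) \<Rightarrow> 'a \<Rightarrow> 'a \<Rightarrow> nat" where
  "gdist E u v = (LEAST d. (u, v) \<in> edge_rel E ^^ d)"

definition diam :: "'a set \<Rightarrow> ('a \<Rightarrow> 'a \<Rightarrow> bool) \<Rightarrow> nat" where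
  "diam V E = Max {gdist E u v | u v. u \<in> V \<and> v \<in> V}"

definition graph_power :: "'a set \<Rightarrow> ('a \<Rightarrow> 'a \<Rightarrow> bool) \<Rightarrow> nat \<Rightarrow> 'a \<Rightarrow> 'a \<Rightarrow> bool" where
  "graph_power V E k u v \<longleftrightarrow> u \<in> V \<and> v \<in> V \<and> u \<noteq> v \<and> gdist E u v \<le> k"

text \<open>Burning process: xs ! i is the source chosen in round i+1.
  burned V E xs i is the set of vertices burned by the end of round i.\<close>
fun burned :: "'a set \<Rightarrow> ('a \<Rightarrow> 'a \<Rightarrow> bool) \<Rightarrow> 'a list \<Rightarrow> nat \<Rightarrow> 'a set" where
  "burned V E xs 0 = {}"
| "burned V E xs (Suc i) =
     burned V E xs i \<union> {v \<in> V. \<exists>u \<in> burned V E xs i. E u v} \<union> {xs ! i}"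

definition burns_in :: "'a set \<Rightarrow> ('a \<Rightarrow> 'a \<Rightarrow> bool) \<Rightarrow> nat \<Rightarrow> bool" where
  "burns_in V E m \<longleftrightarrow> (\<exists>xs. length xs = m \<and> set xs \<subseteq> V \<and> V \<subseteq> burned V E xs m)"

definition burning_number :: "'a set \<Rightarrow> ('a \<Rightarrow> 'a \<Rightarrow> bool) \<Rightarrow> nat" where
  "burning_number V E = (LEAST m. burns_in V E m)"

end

theory Submission
  imports Defs
begin

text \<open>Fix a BFS tree of G rooted at some vertex r. Take a deepest vertex x, walk k t steps up to
its ancestor y, light y, and delete the subtree of y: every deleted vertex is within distance k t
of y, and unless the whole remaining set was deleted, the k t + 1 vertices on the path from x to y
were. Doing this for t = m - 1, ..., 0 burns G^k in m rounds as soon as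
n \<le> \<Sum>i<m. (k i + 1), and m = \<lceil>sqrt (4 (k - 1) n / k^2)\<rceil> satisfies this inequality provided
n > k, which holds because G has two vertices at distance diam G \<ge> k.\<close>

lemma gdist_le_relpow: "(u, v) \<in> edge_rel E ^^ d \<Longrightarrow> gdist E u v \<le> d"
  unfolding gdist_def by (rule Least_le)

lemma gdist_self [simp]: "gdist E u u = 0"
  using gdist_le_relpow[of u u 0 E] by simp

lemma gdist_edge_le_1: "E u v \<Longrightarrow> gdist E u v \<le> 1"
  using gdist_le_relpow[of u v 1 E] by (simp add: edge_rel_def)

text \<open>Source ys ! j is lit in round j + 1, so in G^k its fire has spread over the G-ball of
radius k * (length ys - 1 - j) by the end of round length ys.\<close>
definition shrinking_ball_cover :: "('a \<Rightarrow> 'a \<Rightarrow> bool) \<Rightarrow> nat \<Rightarrow> 'a list \<Rightarrow> 'a set \<Rightarrow> bool" where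
  "shrinking_ball_cover E k ys R \<longleftrightarrow>
     (\<forall>v\<in>R. \<exists>j<length ys. gdist E (ys ! j) v \<le> k * (length ys - 1 - j))"

lemma shrinking_ball_cover_Cons:
  assumes "shrinking_ball_cover E k ys (R - S)" "\<forall>v\<in>S. gdist E y v \<le> k * length ys"
  shows "shrinking_ball_cover E k (y # ys) R"
  unfolding shrinking_ball_cover_def
proof
  fix v assume "v \<in> R"
  show "\<exists>j<length (y # ys). gdist E ((y # ys) ! j) v \<le> k * (length (y # ys) - 1 - j)"
  proof (cases "v \<in> S")
    case True
    then show ?thesis using assms(2) by (intro exI[of _ 0]) simp
  next
    case False
    then obtain j where "j < length ys" "gdist E (ys ! j) v \<le> k * (length ys - 1 - j)"
      using assms(1) \<open>v \<in> R\<close> unfolding shrinking_ball_cover_def by blast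
    then show ?thesis by (intro exI[of _ "Suc j"]) simp
  qed
qed

locale connected_simple_graph =
  fixes V :: "'a set" and E :: "'a \<Rightarrow> 'a \<Rightarrow> bool"
  assumes simple: "simple_graph V E" and connected: "connected_graph V E"
begin

lemma finite_vertices: "finite V"
  using simple unfolding simple_graph_def by blast

lemma edge_vertices: "E u v \<Longrightarrow> u \<in> V \<and> v \<in> V"
  using simple unfolding simple_graph_def by blast

lemma relpow_gdist: "u \<in> V \<Longrightarrow> v \<in> V \<Longrightarrow> (u, v) \<in> edge_rel E ^^ gdist E u v"
proof -
  assume "u \<in> V" "v \<in> V"
  then have "(u, v) \<in> (edge_rel E)\<^sup>*" using connected unfolding connected_graph_def by blast
  then obtain d where "(u, v) \<in> edge_rel E ^^ d" using rtrancl_power by blast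
  then show ?thesis unfolding gdist_def by (rule LeastI)
qed

lemma gdist_eq_0D: "u \<in> V \<Longrightarrow> v \<in> V \<Longrightarrow> gdist E u v = 0 \<Longrightarrow> u = v"
  using relpow_gdist[of u v] by simp

lemma gdist_triangle:
  "u \<in> V \<Longrightarrow> v \<in> V \<Longrightarrow> w \<in> V \<Longrightarrow> gdist E u w \<le> gdist E u v + gdist E v w"
  using relpow_gdist by (blast intro: gdist_le_relpow relpow_add[THEN equalityD2, THEN subsetD])

lemma rtrancl_edge_vertices: "(u, w) \<in> (edge_rel E)\<^sup>* \<Longrightarrow> u \<in> V \<Longrightarrow> w \<in> V"
  by (induction rule: rtrancl_induct) (auto simp: edge_rel_def dest: edge_vertices)

lemma gdist_midpoint:
  assumes "u \<in> V" "v \<in> V" "gdist E u v \<le> s + t"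
  obtains w where "w \<in> V" "gdist E u w \<le> s" "gdist E w v \<le> t"
proof (cases "gdist E u v \<le> s")
  case True
  then show ?thesis using assms by (intro that[of v]) auto
next
  case False
  then have "(u, v) \<in> edge_rel E ^^ (s + (gdist E u v - s))"
    using relpow_gdist assms by simp
  then obtain w where uw: "(u, w) \<in> edge_rel E ^^ s"
    and wv: "(w, v) \<in> edge_rel E ^^ (gdist E u v - s)"
    unfolding relpow_add by blast
  have "w \<in> V" using rtrancl_edge_vertices[OF relpow_imp_rtrancl[OF uw] \<open>u \<in> V\<close>] .
  moreover have "gdist E w v \<le> t" using gdist_le_relpow[OF wv] assms(3) by simp
  ultimately show ?thesis using gdist_le_relpow[OF uw] that by blast
qed

lemma gdist_predecessor:
  assumes "r \<in> V" "v \<in> V" "gdist E r v = Suc d"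
  obtains w where "E w v" "gdist E r w = d"
proof -
  have "(r, v) \<in> edge_rel E ^^ Suc d" using relpow_gdist assms by metis
  then obtain w where rw: "(r, w) \<in> edge_rel E ^^ d" and "(w, v) \<in> edge_rel E"
    by (rule relpow_Suc_E)
  then have wv: "E w v" by (simp add: edge_rel_def)
  have "Suc d \<le> gdist E r w + 1"
    using gdist_triangle[of r w v] gdist_edge_le_1[of E, OF wv] edge_vertices[OF wv] assms by simp
  with gdist_le_relpow[OF rw] wv show ?thesis by (intro that) auto
qed

lemma burned_power_if_gdist_le:
  assumes "set xs \<subseteq> V"
  shows "i \<le> length xs \<Longrightarrow> j < i \<Longrightarrow> v \<in> V \<Longrightarrow> gdist E (xs ! j) v \<le> k * (i - 1 - j)
    \<Longrightarrow> v \<in> burned V (graph_power V E k) xs i"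
proof (induction i arbitrary: j v)
  case 0
  then show ?case by simp
next
  case (Suc i)
  show ?case
  proof (cases "j = i")
    case True
    then have "v = xs ! i"
      using Suc.prems assms gdist_eq_0D[of "xs ! i" v] by (simp add: subset_iff)
    then show ?thesis by simp
  next
    case False
    then have "j < i" using Suc.prems(2) by simp
    then have "gdist E (xs ! j) v \<le> k * (i - 1 - j) + k"
      using Suc.prems(4) by (simp add: Suc_diff_Suc algebra_simps)
    moreover have "xs ! j \<in> V" using Suc.prems(1) \<open>j < i\<close> assms by (simp add: subset_iff)
    ultimately obtain w where w: "w \<in> V" "gdist E (xs ! j) w \<le> k * (i - 1 - j)" "gdist E w v \<le> k"
      using gdist_midpoint Suc.prems(3) by blast
    then have "w \<in> burned V (graph_power V E k) xs i"
      using Suc.IH[OF _ \<open>j < i\<close>] Suc.prems(1) by simp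
    moreover have "w = v \<or> graph_power V E k w v"
      using w Suc.prems(3) unfolding graph_power_def by blast
    ultimately show ?thesis using Suc.prems(3) by auto
  qed
qed

lemma burns_in_power_if_cover:
  assumes "set ys \<subseteq> V" "shrinking_ball_cover E k ys V"
  shows "burns_in V (graph_power V E k) (length ys)"
  unfolding burns_in_def
proof (intro exI conjI)
  show "V \<subseteq> burned V (graph_power V E k) ys (length ys)"
  proof
    fix v assume "v \<in> V"
    then obtain j where "j < length ys" "gdist E (ys ! j) v \<le> k * (length ys - 1 - j)"
      using assms(2) unfolding shrinking_ball_cover_def by blast
    then show "v \<in> burned V (graph_power V E k) ys (length ys)"
      using burned_power_if_gdist_le[OF assms(1)] \<open>v \<in> V\<close> by blast
  qed
qed (use assms(1) in auto)

end

locale rooted_connected_graph = connected_simple_graph +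
  fixes r :: 'a
  assumes root_vertex: "r \<in> V"
begin

definition depth :: "'a \<Rightarrow> nat" where
  "depth v = gdist E r v"

definition parent :: "'a \<Rightarrow> 'a" where
  "parent v = (if v = r then r else SOME w. E w v \<and> depth w + 1 = depth v)"

definition parent_closed :: "'a set \<Rightarrow> bool" where
  "parent_closed R \<longleftrightarrow> (\<forall>v\<in>R. parent v \<in> R)"

definition descendants :: "'a set \<Rightarrow> 'a \<Rightarrow> 'a set" where
  "descendants R y = {v \<in> R. \<exists>j. (parent ^^ j) v = y}"

lemma depth_eq_0_iff: "v \<in> V \<Longrightarrow> depth v = 0 \<longleftrightarrow> v = r"
  using gdist_eq_0D[OF root_vertex] unfolding depth_def by auto

lemma parent_step:
  assumes "v \<in> V"
  shows "parent v \<in> V \<and> depth (parent v) = depth v - 1 \<and> gdist E (parent v) v \<le> 1"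
proof (cases "v = r")
  case True
  then show ?thesis using root_vertex unfolding parent_def depth_def by simp
next
  case False
  then obtain d where "gdist E r v = Suc d"
    using depth_eq_0_iff[OF assms] unfolding depth_def by (metis not0_implies_Suc)
  then have "\<exists>w. E w v \<and> depth w + 1 = depth v" (is "\<exists>w. ?P w")
    using gdist_predecessor[OF root_vertex assms] unfolding depth_def by (metis Suc_eq_plus1)
  then have "?P (parent v)"
    unfolding parent_def using False by (simp only: if_False) (rule someI_ex)
  then show ?thesis using edge_vertices gdist_edge_le_1 by fastforce
qed

lemma funpow_parent:
  assumes "v \<in> V"
  shows "(parent ^^ j) v \<in> V \<and> depth ((parent ^^ j) v) = depth v - j
    \<and> gdist E ((parent ^^ j) v) v \<le> j"
proof (induction j)
  case 0
  then show ?case using assms by simp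
next
  case (Suc j)
  let ?u = "(parent ^^ j) v"
  have "gdist E (parent ?u) v \<le> gdist E (parent ?u) ?u + gdist E ?u v"
    using Suc.IH parent_step assms by (blast intro: gdist_triangle)
  then show ?case using Suc.IH parent_step[of ?u] by auto
qed

lemma funpow_parent_eq_root: "v \<in> V \<Longrightarrow> depth v \<le> j \<Longrightarrow> (parent ^^ j) v = r"
  using funpow_parent[of v j] depth_eq_0_iff by auto

lemma gdist_ancestor_le: "v \<in> V \<Longrightarrow> (parent ^^ j) v = y \<Longrightarrow> gdist E y v \<le> depth v - depth y"
  using funpow_parent[of v j] funpow_parent_eq_root[of v j]
  by (cases "j \<le> depth v") (auto simp: depth_def)

lemma card_ancestor_path:
  assumes "v \<in> V" "s \<le> depth v"
  shows "card ((\<lambda>i. (parent ^^ i) v) ` {..s}) = Suc s"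
proof -
  have "inj_on (\<lambda>i. (parent ^^ i) v) {..s}"
  proof (rule inj_onI)
    fix i j assume "i \<in> {..s}" "j \<in> {..s}" "(parent ^^ i) v = (parent ^^ j) v"
    then show "i = j" using funpow_parent[OF assms(1), of i] funpow_parent[OF assms(1), of j] assms(2)
      by (metis atMost_iff diff_diff_cancel order.trans)
  qed
  then show ?thesis by (simp add: card_image)
qed

lemma funpow_parent_closed: "parent_closed R \<Longrightarrow> x \<in> R \<Longrightarrow> (parent ^^ i) x \<in> R"
  unfolding parent_closed_def by (induction i) auto

lemma parent_closed_Diff_descendants:
  assumes "parent_closed R"
  shows "parent_closed (R - descendants R y)"
  unfolding parent_closed_def
proof
  fix v assume v: "v \<in> R - descendants R y"
  have "parent v \<notin> descendants R y"
  proof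
    assume "parent v \<in> descendants R y"
    then obtain j where "(parent ^^ Suc j) v = y"
      unfolding descendants_def by (auto simp: funpow_swap1)
    then show False using v unfolding descendants_def by blast
  qed
  then show "parent v \<in> R - descendants R y" using v assms unfolding parent_closed_def by blast
qed

context
  fixes R x
  assumes R: "R \<subseteq> V" and x: "x \<in> R" and deepest: "\<forall>v\<in>R. depth v \<le> depth x"
begin

lemma gdist_descendants_of_deepest:
  "v \<in> descendants R ((parent ^^ s) x) \<Longrightarrow> gdist E ((parent ^^ s) x) v \<le> s"
  using gdist_ancestor_le[of v] funpow_parent[of x s] R x deepest
  unfolding descendants_def by fastforce

lemma card_Diff_descendants_of_deepest:
  assumes "parent_closed R"
  shows "card (R - descendants R ((parent ^^ s) x)) \<le> card R - Suc s"
proof (cases "s \<le> depth x")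
  case True
  have fin: "finite R" using R finite_vertices finite_subset by blast
  have sub: "descendants R ((parent ^^ s) x) \<subseteq> R" unfolding descendants_def by blast
  have "(\<lambda>i. (parent ^^ i) x) ` {..s} \<subseteq> descendants R ((parent ^^ s) x)"
  proof
    fix c assume "c \<in> (\<lambda>i. (parent ^^ i) x) ` {..s}"
    then obtain i where "i \<le> s" "c = (parent ^^ i) x" by blast
    then have "(parent ^^ (s - i)) c = (parent ^^ s) x"
      by (metis funpow_add comp_apply le_add_diff_inverse2)
    then show "c \<in> descendants R ((parent ^^ s) x)"
      using funpow_parent_closed[OF assms x] \<open>c = _\<close> unfolding descendants_def by blast
  qed
  then have "card ((\<lambda>i. (parent ^^ i) x) ` {..s}) \<le> card (descendants R ((parent ^^ s) x))"
    by (rule card_mono[OF finite_subset[OF sub fin]])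
  then have "Suc s \<le> card (descendants R ((parent ^^ s) x))"
    using card_ancestor_path[of x s] True R x by auto
  then show ?thesis using card_Diff_subset[OF finite_subset[OF sub fin] sub] by simp
next
  case False
  then have "descendants R ((parent ^^ s) x) = R"
    using funpow_parent_eq_root R x funpow_parent_eq_root[of _ "depth _"]
    unfolding descendants_def by fastforce
  then show ?thesis by simp
qed

end

lemma shrinking_ball_cover_exists:
  assumes "R \<subseteq> V" "parent_closed R" "card R \<le> (\<Sum>i<t. k * i + 1)"
  obtains ys where "length ys = t" "set ys \<subseteq> V" "shrinking_ball_cover E k ys R"
  using assms
proof (induction t arbitrary: R thesis)
  case 0
  then have "R = {}" using finite_vertices finite_subset by fastforce
  then show ?case using "0.prems"(1)[of "[]"] by (simp add: shrinking_ball_cover_def)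
next
  case (Suc t)
  show ?case
  proof (cases "R = {}")
    case True
    then show ?thesis
      using Suc.prems(1)[of "replicate (Suc t) r"] root_vertex
      by (simp add: shrinking_ball_cover_def set_replicate_conv_if)
  next
    case False
    have "finite R" using Suc.prems(2) finite_vertices finite_subset by blast
    then have "Max (depth ` R) \<in> depth ` R" using False by simp
    then obtain x where x: "x \<in> R" "depth x = Max (depth ` R)" by auto
    have deepest: "\<forall>v\<in>R. depth v \<le> depth x" using x(2) \<open>finite R\<close> by simp
    define y where "y = (parent ^^ (k * t)) x"
    have "card (R - descendants R y) \<le> (\<Sum>i<t. k * i + 1)"
      using card_Diff_descendants_of_deepest[OF Suc.prems(2) x(1) deepest Suc.prems(3), of "k * t"]
        Suc.prems(4)
      unfolding y_def by simp
    moreover have "R - descendants R y \<subseteq> V" using Suc.prems(2) by blast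
    ultimately obtain ys where ys: "length ys = t" "set ys \<subseteq> V"
      "shrinking_ball_cover E k ys (R - descendants R y)"
      using Suc.IH[OF _ _ parent_closed_Diff_descendants[OF Suc.prems(3)]] by blast
    have "\<forall>v\<in>descendants R y. gdist E y v \<le> k * length ys"
      using gdist_descendants_of_deepest[OF Suc.prems(2) x(1) deepest] ys(1) unfolding y_def by blast
    then have "shrinking_ball_cover E k (y # ys) R" using shrinking_ball_cover_Cons[OF ys(3)] by blast
    moreover have "y \<in> V" using funpow_parent[of x] x(1) Suc.prems(2) unfolding y_def by blast
    ultimately show ?thesis using Suc.prems(1)[of "y # ys"] ys(1,2) by simp
  qed
qed

end

context connected_simple_graph
begin

lemma gdist_less_card: "u \<in> V \<Longrightarrow> v \<in> V \<Longrightarrow> gdist E u v < card V"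
proof -
  assume "u \<in> V" "v \<in> V"
  interpret rooted_connected_graph V E u using \<open>u \<in> V\<close> by unfold_locales
  have "(\<lambda>i. (parent ^^ i) v) ` {..depth v} \<subseteq> V" using funpow_parent \<open>v \<in> V\<close> by blast
  then have "Suc (depth v) \<le> card V"
    using card_ancestor_path[OF \<open>v \<in> V\<close> order.refl] card_mono[OF finite_vertices] by metis
  then show ?thesis unfolding depth_def by simp
qed

lemma burns_in_power_if_card_le:
  assumes "V \<noteq> {}" "card V \<le> (\<Sum>i<m. k * i + 1)"
  shows "burns_in V (graph_power V E k) m"
proof -
  obtain r where "r \<in> V" using assms(1) by blast
  interpret rooted_connected_graph V E r using \<open>r \<in> V\<close> by unfold_locales
  have "parent_closed V" unfolding parent_closed_def using parent_step by blast
  then obtain ys where "length ys = m" "set ys \<subseteq> V" "shrinking_ball_cover E k ys V"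
    using shrinking_ball_cover_exists[OF order.refl _ assms(2)] by blast
  then show ?thesis using burns_in_power_if_cover by blast
qed

end

lemma diam_attained:
  assumes "finite V" "V \<noteq> {}"
  obtains u v where "u \<in> V" "v \<in> V" "gdist E u v = diam V E"
proof -
  let ?D = "(\<lambda>(u, v). gdist E u v) ` (V \<times> V)"
  have "diam V E = Max ?D" unfolding diam_def by (rule arg_cong[where f = Max]) auto
  moreover have "Max ?D \<in> ?D" using assms by (intro Max_in) auto
  ultimately show ?thesis using that by auto
qed

lemma double_sum_arith_progression:
  "2 * (\<Sum>i<m. k * i + 1) + k * m = k * m * m + 2 * (m :: nat)"
  by (induction m) (simp_all add: algebra_simps)

lemma sum_arith_progression_ge:
  fixes k n m :: nat
  assumes "2 \<le> k" "k + 1 \<le> n" "4 * (k - 1) * n \<le> k\<^sup>2 * m\<^sup>2"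
  shows "n \<le> (\<Sum>i<m. k * i + 1)"
proof -
  define K where "K = int k"
  define M where "M = int m"
  define N where "N = int n"
  define S where "S = int (\<Sum>i<m. k * i + 1)"
  have K: "2 \<le> K" and N: "K + 1 \<le> N" using assms(1,2) by (simp_all add: K_def N_def)
  have quad: "4 * (K - 1) * N \<le> K\<^sup>2 * M\<^sup>2"
    using assms(1) of_nat_mono[OF assms(3), where 'a = int] unfolding K_def M_def N_def
    by (simp add: of_nat_diff)
  have "2 * S + K * M = K * M * M + 2 * M"
    using arg_cong[OF double_sum_arith_progression[of k m], of int] unfolding K_def M_def S_def
    by (simp only: of_nat_add of_nat_mult of_nat_numeral)
  then have sum: "2 * S = K * M * M - K * M + 2 * M" by simp
  have "2 \<le> M"
  proof (rule ccontr)
    assume "\<not> 2 \<le> M"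
    then have "M = 0 \<or> M = 1" using M_def by auto
    then have "M\<^sup>2 \<le> 1" by auto
    have "4 * (K - 1) * (K + 1) \<le> 4 * (K - 1) * N" using N K by (intro mult_left_mono) auto
    also have "\<dots> \<le> K\<^sup>2 * M\<^sup>2" by (rule quad)
    also have "\<dots> \<le> K\<^sup>2" using \<open>M\<^sup>2 \<le> 1\<close> by (simp add: mult_left_le)
    finally have "4 * (K - 1) * (K + 1) \<le> K\<^sup>2" .
    moreover have "4 * (K - 1) * (K + 1) = 4 * K\<^sup>2 - 4" by (simp add: algebra_simps power2_eq_square)
    moreover have "4 \<le> K\<^sup>2" using K power_mono[of 2 K 2] by simp
    ultimately show False by linarith
  qed
  have "4 * (K - 1) * S = 2 * (K - 1) * (K * M * M - K * M + 2 * M)"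
    unfolding sum[symmetric] by simp
  also have "\<dots> = K\<^sup>2 * M\<^sup>2 + M * ((K - 2) * (K * (M - 2) + 2))"
    by (simp add: algebra_simps power2_eq_square)
  finally have "K\<^sup>2 * M\<^sup>2 \<le> 4 * (K - 1) * S"
    using \<open>2 \<le> M\<close> K by simp
  then have "4 * (K - 1) * N \<le> 4 * (K - 1) * S" using quad by linarith
  then have "N \<le> S" using K by simp
  then show ?thesis unfolding N_def S_def by (simp only: of_nat_le_iff)
qed

lemma quadratic_bound_of_sqrt_bound:
  fixes k n m :: nat
  assumes "1 \<le> k" "sqrt (4 * (real k - 1) / (real k)\<^sup>2 * real n) \<le> real m"
  shows "4 * (k - 1) * n \<le> k\<^sup>2 * m\<^sup>2"
proof -
  have "4 * (real k - 1) / (real k)\<^sup>2 * real n \<le> (real m)\<^sup>2"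
    using sqrt_le_D[OF assms(2)] .
  then have "4 * (real k - 1) * real n \<le> (real k)\<^sup>2 * (real m)\<^sup>2"
    using assms(1) by (simp add: field_simps)
  moreover have "real (k - 1) = real k - 1" using assms(1) by simp
  ultimately have "real (4 * (k - 1) * n) \<le> real (k\<^sup>2 * m\<^sup>2)"
    by (simp only: of_nat_mult of_nat_power of_nat_numeral)
  then show ?thesis by (simp only: of_nat_le_iff)
qed

theorem mainTheorem6:
  fixes V :: "'a set" and E :: "'a \<Rightarrow> 'a \<Rightarrow> bool" and k :: nat
  assumes "simple_graph V E"
    and "connected_graph V E"
    and "2 \<le> k" and "k \<le> diam V E"
  shows "int (burning_number V (graph_power V E k))
           \<le> \<lceil>sqrt (4 * (real k - 1) / (real k)\<^sup>2 * real (card V))\<rceil>"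
proof (cases "V = {}")
  case True
  then have "burns_in V (graph_power V E k) 0" unfolding burns_in_def by simp
  then show ?thesis using True unfolding burning_number_def by (simp add: Least_eq_0)
next
  case False
  interpret connected_simple_graph V E using assms(1,2) by unfold_locales
  obtain u v where "u \<in> V" "v \<in> V" "gdist E u v = diam V E"
    using diam_attained[OF finite_vertices False] .
  then have "k + 1 \<le> card V" using gdist_less_card[of u v] assms(4) by linarith
  define X where "X = sqrt (4 * (real k - 1) / (real k)\<^sup>2 * real (card V))"
  define m where "m = nat \<lceil>X\<rceil>"
  have "0 \<le> X" unfolding X_def using assms(3) by simp
  then have m: "int m = \<lceil>X\<rceil>" unfolding m_def by simp
  then have "X \<le> real m" using le_of_int_ceiling[of X] by (metis of_int_of_nat_eq)
  then have "4 * (k - 1) * card V \<le> k\<^sup>2 * m\<^sup>2"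
    using quadratic_bound_of_sqrt_bound[of k "card V" m] assms(3) unfolding X_def by linarith
  then have "card V \<le> (\<Sum>i<m. k * i + 1)"
    by (rule sum_arith_progression_ge[OF assms(3) \<open>k + 1 \<le> card V\<close>])
  then have "burns_in V (graph_power V E k) m" by (rule burns_in_power_if_card_le[OF False])
  then have "burning_number V (graph_power V E k) \<le> m"
    unfolding burning_number_def by (rule Least_le)
  then show ?thesis using m unfolding X_def by linarith
qed

end
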